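(* Let $(\Omega,\mu)$ be a probability space, $\tau:\Omega\to\Omega$ an ergodic measure-preserving map, and $b:\mathbb{N}\times\Omega\to\mathbb{R}$ a measurable function with $b(0,\omega)=0$, $b(n+m,\omega)\leq b(n,\omega)+b(m,\tau^n\omega)$ for all $n,m>0$ and a.e. $\omega$, and $b(1,\cdot)$ integrable, with finite asymptotic average $A=\inf_n\frac1n\int b(n,\omega)\,d\mu$. Let $\delta>0$. Then there exists $c>0$ such that for almost every $\omega$ $$\overline{\mathrm{dens}}\{n\in\mathbb{N}:\ \exists \ell\in[1,n],\ b(n,\omega)-b(n-\ell,\omega)\leq (A-c)\ell\}\leq\delta.$$
   Context: $\overline{\mathrm{dens}}(U)=\limsup_{N\to\infty}\#(U\cap[0,N-1])/N$ is the upper asymptotic density of $U\subset\mathbb{N}$. *)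

theory Defs
  imports "HOL-Probability.Probability"
begin

definition measure_preserving_map :: "'a measure \<Rightarrow> ('a \<Rightarrow> 'a) \<Rightarrow> bool" where
  "measure_preserving_map M T \<longleftrightarrow> T \<in> M \<rightarrow>\<^sub>M M \<and>
     (\<forall>A \<in> sets M. emeasure M (T -` A \<inter> space M) = emeasure M A)"

definition ergodic_map :: "'a measure \<Rightarrow> ('a \<Rightarrow> 'a) \<Rightarrow> bool" where
  "ergodic_map M T \<longleftrightarrow> measure_preserving_map M T \<and>
     (\<forall>A \<in> sets M. T -` A \<inter> space M = A \<longrightarrow> measure M A = 0 \<or> measure M A = 1)"

definition upper_density :: "nat set \<Rightarrow> ereal" where
  "upper_density U = limsup (\<lambda>N. ereal (real (card (U \<inter> {0..<N})) / real N))"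

text \<open>Extended-real integral (positive part minus negative part), defined whenever
  at least one part is finite; used to express the asymptotic average
  inf_n (1/n) int b(n) without presupposing integrability of b(n).\<close>
definition ereal_integral :: "'a measure \<Rightarrow> ('a \<Rightarrow> real) \<Rightarrow> ereal" where
  "ereal_integral M f =
     enn2ereal (\<integral>\<^sup>+ x. ennreal (f x) \<partial>M) - enn2ereal (\<integral>\<^sup>+ x. ennreal (- f x) \<partial>M)"

end

theory Submission
  imports Defs
begin

text \<open>
  Put \<open>f = \<bar>b 1\<bar>\<close> and let \<open>S\<^sub>N = \<Sum>\<^sub>i\<^sub><\<^sub>N f \<circ> \<tau>\<^sup>i\<close> be its Birkhoff sums. Subadditivity makes the
  defect \<open>y\<^sub>N = S\<^sub>N - b\<^sub>N\<close> a nonnegative superadditive cocycle with \<open>\<integral>y\<^sub>N \<le> N (\<integral>f - A)\<close>.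
  Ergodicity upgrades this to an almost sure bound \<open>y\<^sub>N \<le> tN + K\<close> with a deterministic slope \<open>t\<close>:
  the points where \<open>y\<^sub>N - tN\<close> is unbounded form an invariant set, and if it were of full measure
  one could choose \<open>L\<close> such that \<open>y\<^sub>l \<le> tl\<close> for all \<open>l \<le> L\<close> only on a set of measure \<open>< 1/2\<close>;
  covering \<open>[0, N)\<close> greedily by windows on which \<open>y\<close> grows at rate \<open>t\<close> then gives
  \<open>\<integral>y\<^sub>N \<ge> tN/2 - tL\<close>, which is impossible once \<open>t > 2 (\<integral>f - A)\<close>.
  Finally, every \<open>n\<close> in the exceptional set ends a window on which \<open>b\<close> drops by at least
  \<open>(c - A) \<ell>\<close>, whereas \<open>b\<close> rises by at most \<open>f\<close> per step; counting such windows shows that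
  \<open>c - A\<close> times the number of exceptional \<open>n \<le> N\<close> is at most \<open>y\<^sub>N \<le> tN + K\<close>, so the upper
  density is at most \<open>t / (c - A) \<le> \<delta>\<close> for \<open>c\<close> large.
\<close>

section \<open>Measure-preserving maps and Birkhoff sums\<close>

lemma measure_preserving_map_measurable:
  "measure_preserving_map M T \<Longrightarrow> T \<in> M \<rightarrow>\<^sub>M M"
  by (simp add: measure_preserving_map_def)

lemma funpow_measurable:
  assumes "T \<in> M \<rightarrow>\<^sub>M M" shows "T ^^ n \<in> M \<rightarrow>\<^sub>M M"
  by (induction n) (auto intro: measurable_compose[OF _ assms])

lemma distr_funpow_measure_preserving:
  assumes mp: "measure_preserving_map M T" shows "distr M M (T ^^ n) = M"
proof (induction n)
  case 0 then show ?case by (simp add: distr_id2)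
next
  case (Suc n)
  note T = measure_preserving_map_measurable[OF mp]
  have distr_T: "distr M M T = M"
    by (rule measure_eqI) (use mp in \<open>auto simp: emeasure_distr[OF T] measure_preserving_map_def\<close>)
  have "distr M M (T ^^ Suc n) = distr M M (T ^^ n \<circ> T)" by (simp only: funpow_Suc_right)
  also have "\<dots> = distr (distr M M T) M (T ^^ n)"
    using distr_distr[OF funpow_measurable[OF T] T] by simp
  also have "\<dots> = M" using distr_T Suc by simp
  finally show ?case .
qed

lemma AE_funpow_measure_preserving:
  assumes mp: "measure_preserving_map M T" and "AE x in M. P x"
  shows "AE x in M. P ((T ^^ n) x)"
proof (rule AE_distrD[OF funpow_measurable[OF measure_preserving_map_measurable[OF mp]]])
  show "AE x in distr M M (T ^^ n). P x"
    using assms(2) by (subst distr_funpow_measure_preserving[OF mp])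
qed

lemma integrable_funpow_measure_preserving:
  fixes g :: "'a \<Rightarrow> real"
  assumes mp: "measure_preserving_map M T" and "integrable M g"
  shows "integrable M (\<lambda>x. g ((T ^^ n) x))"
  using integrable_distr_eq[OF funpow_measurable[OF measure_preserving_map_measurable[OF mp]], of g]
    assms by (simp add: distr_funpow_measure_preserving[OF mp])

lemma integral_funpow_measure_preserving:
  fixes g :: "'a \<Rightarrow> real"
  assumes mp: "measure_preserving_map M T" and "g \<in> borel_measurable M"
  shows "integral\<^sup>L M (\<lambda>x. g ((T ^^ n) x)) = integral\<^sup>L M g"
  using integral_distr[OF funpow_measurable[OF measure_preserving_map_measurable[OF mp]] assms(2)]
  by (simp add: distr_funpow_measure_preserving[OF mp])

definition birkhoff_sum :: "('a \<Rightarrow> 'a) \<Rightarrow> ('a \<Rightarrow> real) \<Rightarrow> nat \<Rightarrow> 'a \<Rightarrow> real" where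
  "birkhoff_sum T f n x = (\<Sum>i<n. f ((T ^^ i) x))"

lemma birkhoff_sum_add:
  "birkhoff_sum T f (k + l) x = birkhoff_sum T f k x + birkhoff_sum T f l ((T ^^ k) x)"
  by (induction l) (auto simp: birkhoff_sum_def funpow_add add.commute)

lemma integrable_birkhoff_sum:
  assumes "measure_preserving_map M T" and "integrable M f"
  shows "integrable M (birkhoff_sum T f n)"
  unfolding birkhoff_sum_def using integrable_funpow_measure_preserving[OF assms] by auto

lemma integral_birkhoff_sum:
  assumes mp: "measure_preserving_map M T" and f: "integrable M f"
  shows "integral\<^sup>L M (birkhoff_sum T f n) = real n * integral\<^sup>L M f"
proof -
  have "integral\<^sup>L M (birkhoff_sum T f n) = (\<Sum>i<n. integral\<^sup>L M (\<lambda>x. f ((T ^^ i) x)))"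
    unfolding birkhoff_sum_def
    by (rule Bochner_Integration.integral_sum) (rule integrable_funpow_measure_preserving[OF mp f])
  also have "\<dots> = (\<Sum>i<n. integral\<^sup>L M f)"
    using integral_funpow_measure_preserving[OF mp borel_measurable_integrable[OF f]] by simp
  finally show ?thesis by simp
qed

section \<open>Invariant sets of ergodic maps\<close>

lemma AE_invariant_of_subinvariant:
  assumes "finite_measure M" and mp: "measure_preserving_map M T" and S: "S \<in> sets M"
    and sub: "AE x in M. T x \<in> S \<longrightarrow> x \<in> S"
  shows "AE x in M. T x \<in> S \<longleftrightarrow> x \<in> S"
proof -
  interpret finite_measure M by fact
  note T = measure_preserving_map_measurable[OF mp]
  define P where "P = T -` S \<inter> space M"
  have P: "P \<in> sets M" unfolding P_def using measurable_sets[OF T S] .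
  have "measure M P = measure M S"
    using mp S by (simp add: P_def measure_preserving_map_def measure_def)
  moreover have "measure M (P \<union> S) = measure M S"
    by (rule measure_eq_AE) (use sub S P in \<open>auto simp: P_def\<close>)
  moreover have "measure M (P \<union> S) = measure M P + measure M (S - P)"
    using finite_measure_Union[of P "S - P"] S P by (simp add: Un_Diff_cancel)
  ultimately have "S - P \<in> null_sets M"
    using S P by (simp add: null_setsI emeasure_eq_measure)
  then have "AE x in M. x \<notin> S - P" by (rule AE_not_in)
  then show ?thesis using sub AE_space by eventually_elim (auto simp: P_def)
qed

lemma infinitely_often_set_invariant:
  fixes S :: "'a set"
  assumes T: "T \<in> M \<rightarrow>\<^sub>M M"
  defines "R \<equiv> {x \<in> space M. \<forall>m. \<exists>n\<ge>m. (T ^^ n) x \<in> S}"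
  shows "T -` R \<inter> space M = R"
proof (rule set_eqI, rule iffI)
  fix x assume "x \<in> T -` R \<inter> space M"
  then have x: "x \<in> space M" "T x \<in> R" by auto
  have "\<exists>n\<ge>m. (T ^^ n) x \<in> S" for m
  proof -
    from x(2) obtain n where "n \<ge> m" "(T ^^ n) (T x) \<in> S" unfolding R_def by blast
    then show ?thesis by (intro exI[of _ "Suc n"]) (auto simp: funpow_swap1)
  qed
  then show "x \<in> R" using x(1) by (simp add: R_def)
next
  fix x assume x: "x \<in> R"
  have "\<exists>n\<ge>m. (T ^^ n) (T x) \<in> S" for m
  proof -
    from x obtain n where "n \<ge> Suc m" "(T ^^ n) x \<in> S" unfolding R_def by blast
    then obtain k where "k \<ge> m" "(T ^^ Suc k) x \<in> S" by (metis Suc_le_D Suc_le_mono)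
    then show ?thesis by (auto simp: funpow_swap1)
  qed
  then show "x \<in> T -` R \<inter> space M" using x measurable_space[OF T] by (auto simp: R_def)
qed

lemma ergodic_invariant_measure_0_or_1:
  assumes "prob_space M" and erg: "ergodic_map M T" and S: "S \<in> sets M"
    and inv: "AE x in M. T x \<in> S \<longleftrightarrow> x \<in> S"
  shows "measure M S = 0 \<or> measure M S = 1"
proof -
  interpret prob_space M by fact
  have mp: "measure_preserving_map M T" using erg by (simp add: ergodic_map_def)
  note T = measure_preserving_map_measurable[OF mp]
  have orbit: "AE x in M. \<forall>n. (T ^^ n) x \<in> S \<longleftrightarrow> x \<in> S"
  proof -
    have "AE x in M. (T ^^ n) x \<in> S \<longleftrightarrow> x \<in> S" for n
    proof (induction n)
      case (Suc n)
      with AE_funpow_measure_preserving[OF mp inv, of n] show ?case by eventually_elim auto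
    qed simp
    then show ?thesis by (simp add: AE_all_countable)
  qed
  \<comment> \<open>the points visiting S infinitely often form a strictly invariant version of S\<close>
  define S' where "S' = {x \<in> space M. \<forall>m. \<exists>n\<ge>m. (T ^^ n) x \<in> S}"
  have S'_eq: "S' = (\<Inter>m. \<Union>n\<in>{m..}. (T ^^ n) -` S \<inter> space M)"
    unfolding S'_def by (auto simp: Bex_def Ball_def)
  have S': "S' \<in> sets M" unfolding S'_eq
    by (intro sets.countable_INT' sets.countable_UN' image_subsetI
        measurable_sets[OF funpow_measurable[OF T] S]) auto
  have "T -` S' \<inter> space M = S'"
    unfolding S'_def by (rule infinitely_often_set_invariant[OF T])
  then have "measure M S' = 0 \<or> measure M S' = 1"
    using erg S' by (simp add: ergodic_map_def)
  moreover have "measure M S' = measure M S"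
    by (rule measure_eq_AE[OF _ S' S]) (use orbit AE_space in \<open>eventually_elim; auto simp: S'_def\<close>)
  ultimately show ?thesis by simp
qed

section \<open>Counting windows of fast growth and fast descent\<close>

lemma monotone_window_increment_bound:
  fixes Y :: "nat \<Rightarrow> real" and bad :: "nat \<Rightarrow> bool"
  assumes t: "t \<ge> 0" and mono: "\<And>k j. Y k \<le> Y (k + j)"
    and good: "\<And>k. \<not> bad k \<Longrightarrow> \<exists>l\<in>{1..L}. Y k + t * real l \<le> Y (k + l)"
    and "k \<le> N"
  shows "t * (real N - real k - real L - real (card {j\<in>{k..<N}. bad j})) \<le> Y N - Y k"
  using \<open>k \<le> N\<close>
proof (induction "N - k" arbitrary: k rule: less_induct)
  case less
  show ?case
  proof (cases "k < N")
    case False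
    then show ?thesis using less.prems t by (simp add: mult_nonneg_nonpos)
  next
    case kN: True
    show ?thesis
    proof (cases "bad k")
      case True
      have "{j\<in>{k..<N}. bad j} = insert k {j\<in>{Suc k..<N}. bad j}" using kN True by auto
      then have "card {j\<in>{k..<N}. bad j} = Suc (card {j\<in>{Suc k..<N}. bad j})" by simp
      moreover have "Y k \<le> Y (Suc k)" using mono[of k 1] by simp
      moreover have "t * (real N - real (Suc k) - real L - real (card {j\<in>{Suc k..<N}. bad j}))
          \<le> Y N - Y (Suc k)"
        using less.hyps[of "Suc k"] kN by simp
      ultimately show ?thesis by (simp add: algebra_simps)
    next
      case False
      then obtain l where l: "l \<in> {1..L}" "Y k + t * real l \<le> Y (k + l)" using good by blast
      show ?thesis
      proof (cases "k + l \<le> N")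
        case True
        have "card {j\<in>{k + l..<N}. bad j} \<le> card {j\<in>{k..<N}. bad j}"
          by (rule card_mono) auto
        then have "t * (real N - real k - real L - real (card {j\<in>{k..<N}. bad j}))
            \<le> t * (real N - real (k + l) - real L - real (card {j\<in>{k + l..<N}. bad j})) + t * real l"
          using t by (simp add: algebra_simps mult_left_mono)
        moreover have "t * (real N - real (k + l) - real L - real (card {j\<in>{k + l..<N}. bad j}))
            \<le> Y N - Y (k + l)"
        proof -
          have "N - (k + l) < N - k" using True l(1) by auto
          then show ?thesis using less.hyps[of "k + l"] True by simp
        qed
        ultimately show ?thesis using l(2) by linarith
      next
        case False
        then have "t * (real N - real k - real L - real (card {j\<in>{k..<N}. bad j})) \<le> 0"
          using l(1) t by (intro mult_nonneg_nonpos) auto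
        moreover have "Y k \<le> Y N" using mono[of k "N - k"] kN by simp
        ultimately show ?thesis by linarith
      qed
    qed
  qed
qed

lemma descent_count_bound:
  fixes \<beta> u :: "nat \<Rightarrow> real" and a :: real
  assumes "\<beta> 0 = 0" and step: "\<And>k. \<beta> (Suc k) \<le> \<beta> k + u k" and "a < 0"
    and u: "\<And>k. 0 \<le> u k"
  shows "\<beta> N - a * real (card ({n. \<exists>l\<in>{1..n}. \<beta> n - \<beta> (n - l) \<le> a * real l} \<inter> {1..N}))
           \<le> (\<Sum>i<N. u i)"
proof (induction N rule: less_induct)
  case (less N)
  define E where "E = {n. \<exists>l\<in>{1..n}. \<beta> n - \<beta> (n - l) \<le> a * real l}"
  have IH: "\<And>m. m < N \<Longrightarrow> \<beta> m - a * real (card (E \<inter> {1..m})) \<le> (\<Sum>i<m. u i)"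
    using less unfolding E_def by blast
  consider "N = 0" | N' where "N = Suc N'" "N \<notin> E" | "N \<in> E"
    by (metis not0_implies_Suc)
  then have "\<beta> N - a * real (card (E \<inter> {1..N})) \<le> (\<Sum>i<N. u i)"
  proof cases
    case 1
    then show ?thesis using \<open>\<beta> 0 = 0\<close> by simp
  next
    case 2
    then have "E \<inter> {1..N} = E \<inter> {1..N'}" by (auto simp: le_Suc_eq)
    then show ?thesis using IH[of N'] step[of N'] 2 by simp
  next
    case 3
    then obtain l where l: "l \<in> {1..N}" "\<beta> N - \<beta> (N - l) \<le> a * real l" unfolding E_def by blast
    have "card (E \<inter> {1..N}) \<le> card ((E \<inter> {1..N - l}) \<union> {N - l + 1..N})"
      by (rule card_mono) auto
    also have "\<dots> \<le> card (E \<inter> {1..N - l}) + l"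
      using card_Un_le[of "E \<inter> {1..N - l}" "{N - l + 1..N}"] l(1) by simp
    finally have "- a * real (card (E \<inter> {1..N})) \<le> - a * (real (card (E \<inter> {1..N - l})) + real l)"
      using \<open>a < 0\<close> by (intro mult_left_mono) auto
    moreover have "(\<Sum>i<N - l. u i) \<le> (\<Sum>i<N. u i)" by (rule sum_mono2) (auto simp: u)
    ultimately show ?thesis using IH[of "N - l"] l by (simp add: algebra_simps)
  qed
  then show ?case unfolding E_def .
qed

lemma upper_density_le_of_count_bound:
  fixes E :: "nat set" and d s K \<delta> :: real
  assumes count: "\<And>N. d * real (card (E \<inter> {1..N})) \<le> s * real N + K"
    and "d > 0" and "s \<le> \<delta> * d" and "\<delta> > 0" and "0 \<notin> E"
  shows "upper_density E \<le> ereal \<delta>"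
proof -
  have ratio: "real (card (E \<inter> {0..<N})) / real N \<le> \<delta> + (K / d) / real N" for N
  proof (cases "N = 0")
    case False
    have "E \<inter> {0..<N} \<subseteq> E \<inter> {1..N}" using \<open>0 \<notin> E\<close> by (auto simp: Suc_le_eq) (metis gr0I)
    then have "card (E \<inter> {0..<N}) \<le> card (E \<inter> {1..N})" by (intro card_mono) auto
    then have "d * real (card (E \<inter> {0..<N})) \<le> s * real N + K"
      using count[of N] \<open>d > 0\<close> by (smt (verit) mult_left_mono of_nat_le_iff)
    also have "\<dots> \<le> \<delta> * d * real N + K" using \<open>s \<le> \<delta> * d\<close> by (simp add: mult_right_mono)
    finally show ?thesis using False \<open>d > 0\<close> by (simp add: field_simps)
  qed (use \<open>\<delta> > 0\<close> in simp)
  have "upper_density E \<le> limsup (\<lambda>N. ereal (\<delta> + (K / d) / real N))"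
    unfolding upper_density_def by (rule Limsup_mono) (use ratio in auto)
  also have "\<dots> = ereal \<delta>"
  proof (rule lim_imp_Limsup)
    show "((\<lambda>N. ereal (\<delta> + K / d / real N)) \<longlongrightarrow> ereal \<delta>) sequentially"
      unfolding lim_ereal using tendsto_add[OF tendsto_const lim_const_over_n[of "K / d"]] by simp
  qed simp
  finally show ?thesis .
qed

lemma upper_density_descent_times_le:
  fixes \<beta> u :: "nat \<Rightarrow> real" and a t K \<delta> :: real
  assumes "\<beta> 0 = 0" and "\<And>k. \<beta> (Suc k) \<le> \<beta> k + u k" and "\<And>k. 0 \<le> u k"
    and growth: "\<And>N. (\<Sum>i<N. u i) - \<beta> N \<le> t * real N + K"
    and "a < 0" and "t \<le> \<delta> * - a" and "\<delta> > 0"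
  shows "upper_density {n. \<exists>l\<in>{1..n}. \<beta> n - \<beta> (n - l) \<le> a * real l} \<le> ereal \<delta>"
proof (rule upper_density_le_of_count_bound)
  fix N
  show "- a * real (card ({n. \<exists>l\<in>{1..n}. \<beta> n - \<beta> (n - l) \<le> a * real l} \<inter> {1..N}))
      \<le> t * real N + K"
    using descent_count_bound[OF assms(1,2,5,3), of N] growth[of N] by linarith
qed (use assms in auto)

section \<open>Linear growth of superadditive cocycles\<close>

lemma superadditive_lower_bound_by_visits:
  fixes y :: "nat \<Rightarrow> 'a \<Rightarrow> real"
  assumes sup: "\<And>k l. y k x + y l ((T ^^ k) x) \<le> y (k + l) x"
    and pos: "\<And>k n. 0 \<le> y n ((T ^^ k) x)" and "y 0 x = 0" and "t \<ge> 0"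
    and leave: "\<And>k. (T ^^ k) x \<notin> B \<Longrightarrow> \<exists>l\<in>{1..L}. t * real l < y l ((T ^^ k) x)"
  shows "t * (real N - real L - birkhoff_sum T (indicator B) N x) \<le> y N x"
proof -
  have "y k x \<le> y (k + j) x" for k j
    using sup[of k j] pos[where k = k and n = j] by linarith
  moreover have "\<exists>l\<in>{1..L}. y k x + t * real l \<le> y (k + l) x" if out: "(T ^^ k) x \<notin> B" for k
  proof -
    obtain l where "l \<in> {1..L}" "t * real l < y l ((T ^^ k) x)" using leave[OF out] by blast
    then show ?thesis using sup[of k l] by (intro bexI[of _ l]) auto
  qed
  ultimately have "t * (real N - real 0 - real L - real (card {j\<in>{0..<N}. (T ^^ j) x \<in> B}))
      \<le> y N x - y 0 x"
    by (intro monotone_window_increment_bound[where bad = "\<lambda>j. (T ^^ j) x \<in> B"]) (use \<open>t \<ge> 0\<close> in auto)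
  moreover have "birkhoff_sum T (indicator B) N x = real (card {j\<in>{0..<N}. (T ^^ j) x \<in> B})"
    using sum_indicator_eq_card[of "{..<N}" "{j. (T ^^ j) x \<in> B}"]
    by (simp add: birkhoff_sum_def indicator_def Int_def lessThan_atLeast0 conj_commute)
  ultimately show ?thesis using \<open>y 0 x = 0\<close> by simp
qed

lemma superadditive_integral_lower_bound:
  fixes y :: "nat \<Rightarrow> 'a \<Rightarrow> real" and L N :: nat
  assumes "prob_space M" and mp: "measure_preserving_map M T"
    and [measurable]: "\<And>n. y n \<in> borel_measurable M" and int: "integrable M (y N)"
    and y0: "\<And>x. x \<in> space M \<Longrightarrow> y 0 x = 0"
    and sup: "AE x in M. \<forall>k l. y k x + y l ((T ^^ k) x) \<le> y (k + l) x"
    and pos: "AE x in M. \<forall>n. 0 \<le> y n x" and "t \<ge> 0"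
  defines "B \<equiv> {x \<in> space M. \<forall>l\<in>{1..L}. y l x \<le> t * real l}"
  shows "t * (real N - real L) - t * real N * measure M B \<le> integral\<^sup>L M (y N)"
proof -
  interpret prob_space M by fact
  note T = funpow_measurable[OF measure_preserving_map_measurable[OF mp]]
  have B: "B \<in> sets M" unfolding B_def by measurable
  have int_B: "integrable M (indicator B :: 'a \<Rightarrow> real)"
    using B by (auto simp: emeasure_eq_measure)
  have "AE x in M. \<forall>k n. 0 \<le> y n ((T ^^ k) x)"
    using AE_funpow_measure_preserving[OF mp pos] by (simp add: AE_all_countable)
  then have "AE x in M. t * (real N - real L - birkhoff_sum T (indicator B) N x) \<le> y N x"
    using sup AE_space
  proof eventually_elim
    case (elim x)
    have "(T ^^ k) x \<in> space M" for k using measurable_space[OF T elim(3)] .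
    then show ?case
      using elim y0 \<open>t \<ge> 0\<close> by (intro superadditive_lower_bound_by_visits) (auto simp: B_def not_le)
  qed
  then have "integral\<^sup>L M (\<lambda>x. t * (real N - real L - birkhoff_sum T (indicator B) N x))
      \<le> integral\<^sup>L M (y N)"
    using integrable_birkhoff_sum[OF mp int_B, of N] by (intro integral_mono_AE int) auto
  also have "integral\<^sup>L M (\<lambda>x. t * (real N - real L - birkhoff_sum T (indicator B) N x))
      = t * (real N - real L) - t * real N * measure M B"
    using integrable_birkhoff_sum[OF mp int_B] B
    by (simp add: integral_birkhoff_sum[OF mp int_B] prob_space algebra_simps)
  finally show ?thesis .
qed

lemma superadditive_not_AE_above_slope:
  fixes y :: "nat \<Rightarrow> 'a \<Rightarrow> real"
  assumes PS: "prob_space M" and mp: "measure_preserving_map M T"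
    and meas [measurable]: "\<And>n. y n \<in> borel_measurable M" and int: "\<And>n. integrable M (y n)"
    and y0: "\<And>x. x \<in> space M \<Longrightarrow> y 0 x = 0"
    and sup: "AE x in M. \<forall>k l. y k x + y l ((T ^^ k) x) \<le> y (k + l) x"
    and pos: "AE x in M. \<forall>n. 0 \<le> y n x"
    and growth: "\<And>N. integral\<^sup>L M (y N) \<le> real N * C" and "2 * C < t"
  shows "\<not> (AE x in M. \<exists>N. t * real N < y N x)"
proof
  assume above: "AE x in M. \<exists>N. t * real N < y N x"
  interpret prob_space M by fact
  have "0 \<le> integral\<^sup>L M (y 1)" using pos by (intro integral_nonneg_AE) auto
  then have "0 \<le> C" using growth[of 1] by simp
  with \<open>2 * C < t\<close> have "0 < t/2 - C" by simp
  define B where "B L = {x \<in> space M. \<forall>l\<in>{1..L}. y l x \<le> t * real l}" for L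
  have B: "B L \<in> sets M" for L unfolding B_def by measurable
  have "AE x in M. x \<notin> (\<Inter>L. B L)"
    using above
  proof eventually_elim
    case (elim x)
    then obtain N where "t * real N < y N x" by blast
    then show ?case using y0[of x] by (cases "N = 0") (auto simp: B_def not_le intro!: exI[of _ N] bexI[of _ N])
  qed
  then have "(\<Inter>L. B L) \<in> null_sets M" using B by (subst AE_iff_null_sets) auto
  moreover have "(\<lambda>L. measure M (B L)) \<longlonglongrightarrow> measure M (\<Inter>L. B L)"
    using B by (intro finite_Lim_measure_decseq) (auto simp: decseq_def B_def)
  ultimately have "(\<lambda>L. measure M (B L)) \<longlonglongrightarrow> 0" by (simp add: measure_eq_0_null_sets)
  then have "eventually (\<lambda>L. measure M (B L) < 1/2) sequentially" by (rule order_tendstoD) simp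
  then obtain L where L: "measure M (B L) < 1/2" by (auto simp: eventually_sequentially)
  define N where "N = nat \<lceil>t * real L / (t/2 - C)\<rceil> + 1"
  have "t * (real N - real L) - t * real N * measure M (B L) \<le> real N * C"
    using superadditive_integral_lower_bound[OF PS mp meas int y0 sup pos, where t = t and L = L and N = N]
      growth[of N] \<open>0 < t/2 - C\<close> \<open>0 \<le> C\<close> by (simp add: B_def)
  moreover have "t * real N * measure M (B L) \<le> t * real N * (1/2)"
    using L \<open>0 < t/2 - C\<close> \<open>0 \<le> C\<close> by (intro mult_left_mono) auto
  ultimately have "(t/2 - C) * real N \<le> t * real L" by (simp add: algebra_simps)
  moreover have "t * real L / (t/2 - C) < real N" unfolding N_def by linarith
  ultimately show False using \<open>0 < t/2 - C\<close> by (simp add: field_simps)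
qed

lemma superadditive_AE_linear_bound:
  fixes y :: "nat \<Rightarrow> 'a \<Rightarrow> real"
  assumes PS: "prob_space M" and erg: "ergodic_map M T"
    and meas [measurable]: "\<And>n. y n \<in> borel_measurable M" and int: "\<And>n. integrable M (y n)"
    and y0: "\<And>x. x \<in> space M \<Longrightarrow> y 0 x = 0"
    and sup: "AE x in M. \<forall>k l. y k x + y l ((T ^^ k) x) \<le> y (k + l) x"
    and pos: "AE x in M. \<forall>n. 0 \<le> y n x"
    and growth: "\<And>N. integral\<^sup>L M (y N) \<le> real N * C"
  shows "\<exists>t. AE x in M. \<exists>K. \<forall>N. y N x \<le> t * real N + K"
proof -
  interpret prob_space M by fact
  have mp: "measure_preserving_map M T" using erg by (simp add: ergodic_map_def)
  define t where "t = 2 * C + 1"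
  \<comment> \<open>\<open>K\<close> ranges over \<open>nat\<close> only to make \<open>G\<close> visibly measurable\<close>
  define G where "G = {x \<in> space M. \<forall>K::nat. \<exists>N. t * real N + real K < y N x}"
  have G: "G \<in> sets M" unfolding G_def by measurable
  have "AE x in M. T x \<in> G \<longrightarrow> x \<in> G"
    using sup pos AE_space
  proof eventually_elim
    case (elim x)
    have "\<exists>N. t * real N + real K < y N x" if "T x \<in> G" for K
    proof -
      obtain N where N: "t * real N + real (K + nat \<lceil>t\<rceil>) < y N (T x)"
        using \<open>T x \<in> G\<close> unfolding G_def by blast
      have "y N (T x) \<le> y (Suc N) x" using elim(1)[rule_format, of 1 N] elim(2)[rule_format, of 1] by simp
      moreover have "real K + t \<le> real (K + nat \<lceil>t\<rceil>)" by linarith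
      ultimately show ?thesis using N by (intro exI[of _ "Suc N"]) (simp add: algebra_simps)
    qed
    then show ?case using elim(3) by (simp add: G_def)
  qed
  then have "AE x in M. T x \<in> G \<longleftrightarrow> x \<in> G"
    by (rule AE_invariant_of_subinvariant[OF finite_measure_axioms mp G])
  then have "measure M G = 0 \<or> measure M G = 1"
    by (rule ergodic_invariant_measure_0_or_1[OF PS erg G])
  moreover have "measure M G \<noteq> 1"
  proof
    assume "measure M G = 1"
    then have "AE x in M. x \<in> G" using prob_eq_1[OF G] by simp
    then have "AE x in M. \<exists>N. t * real N < y N x"
    proof eventually_elim
      case (elim x)
      then obtain N where "t * real N + real (0::nat) < y N x" unfolding G_def by blast
      then show ?case by auto
    qed
    then show False
      using superadditive_not_AE_above_slope[OF PS mp meas int y0 sup pos growth] by (simp add: t_def)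
  qed
  ultimately have "AE x in M. x \<notin> G"
    using G by (simp add: AE_iff_null_sets[symmetric] null_setsI emeasure_eq_measure)
  then have "AE x in M. \<exists>K. \<forall>N. y N x \<le> t * real N + K"
    using AE_space by eventually_elim (force simp: G_def not_less)
  then show ?thesis by blast
qed

section \<open>Subadditive cocycles\<close>

lemma enn2ereal_eq_ereal_enn2real: "x \<noteq> \<infinity> \<Longrightarrow> enn2ereal x = ereal (enn2real x)"
  by (cases x rule: ennreal_cases) auto

lemma ereal_integral_eq_integral:
  fixes f :: "'a \<Rightarrow> real"
  assumes "integrable M f" shows "ereal_integral M f = ereal (integral\<^sup>L M f)"
  using integrableD(2,3)[OF assms]
  by (simp add: ereal_integral_def real_lebesgue_integral_def[OF assms] enn2ereal_eq_ereal_enn2real)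

lemma integrable_of_ereal_integral:
  fixes f g :: "'a \<Rightarrow> real"
  assumes "f \<in> borel_measurable M" and le: "AE x in M. f x \<le> g x"
    and g: "integrable M g" and not_minf: "ereal_integral M f \<noteq> - \<infinity>"
  shows "integrable M f"
proof -
  have "(\<integral>\<^sup>+x. ennreal (f x) \<partial>M) \<le> (\<integral>\<^sup>+x. ennreal (g x) \<partial>M)"
    using le by (intro nn_integral_mono_AE) (auto intro: ennreal_leI)
  then have pos: "(\<integral>\<^sup>+x. ennreal (f x) \<partial>M) \<noteq> \<infinity>"
    using integrableD(2)[OF g] by (auto simp: top_unique)
  moreover have "(\<integral>\<^sup>+x. ennreal (- f x) \<partial>M) \<noteq> \<infinity>"
  proof
    assume "(\<integral>\<^sup>+x. ennreal (- f x) \<partial>M) = \<infinity>"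
    then have "ereal_integral M f = - \<infinity>"
      using pos by (simp add: ereal_integral_def enn2ereal_eq_ereal_enn2real)
    with not_minf show False ..
  qed
  ultimately show ?thesis using assms(1) by (simp add: real_integrable_def)
qed

lemma subadditive_le_birkhoff_sum:
  fixes b :: "nat \<Rightarrow> 'a \<Rightarrow> real"
  assumes "b 0 x = 0" and sub: "\<And>n m. b (n + m) x \<le> b n x + b m ((T ^^ n) x)"
  shows "b N x \<le> birkhoff_sum T (b 1) N x"
proof (induction N)
  case (Suc N)
  then show ?case using sub[of N 1] by (simp add: birkhoff_sum_def)
qed (simp add: \<open>b 0 x = 0\<close> birkhoff_sum_def)

lemma integrable_subadditive:
  fixes b :: "nat \<Rightarrow> 'a \<Rightarrow> real"
  assumes "prob_space M" and mp: "measure_preserving_map M T"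
    and meas: "\<And>n. b n \<in> borel_measurable M"
    and b0: "\<And>x. x \<in> space M \<Longrightarrow> b 0 x = 0"
    and sub: "AE x in M. \<forall>n m. b (n + m) x \<le> b n x + b m ((T ^^ n) x)"
    and int1: "integrable M (b 1)"
    and average: "(INF n\<in>{1..}. ereal_integral M (b n) / ereal (real n)) = ereal A"
  shows "integrable M (b N)" and "A * real N \<le> integral\<^sup>L M (b N)"
proof -
  interpret prob_space M by fact
  have "integrable M (b N) \<and> A * real N \<le> integral\<^sup>L M (b N)"
  proof (cases "N = 0")
    case True
    have "integrable M (b 0) = integrable M (\<lambda>_. 0 :: real)"
      using b0 by (intro Bochner_Integration.integrable_cong) auto
    moreover have "integral\<^sup>L M (b 0) = integral\<^sup>L M (\<lambda>_. 0 :: real)"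
      using b0 by (intro Bochner_Integration.integral_cong) auto
    ultimately show ?thesis using True by simp
  next
    case False
    have le: "ereal A \<le> ereal_integral M (b N) / ereal (real N)"
      unfolding average[symmetric] using False by (intro INF_lower) auto
    have "AE x in M. b N x \<le> birkhoff_sum T (b 1) N x"
      using sub AE_space
    proof eventually_elim
      case (elim x)
      show ?case using elim(1) b0[OF elim(2)] by (intro subadditive_le_birkhoff_sum) blast+
    qed
    moreover have "ereal_integral M (b N) \<noteq> - \<infinity>"
      using le False by (cases "ereal_integral M (b N)") auto
    ultimately have int: "integrable M (b N)"
      by (rule integrable_of_ereal_integral[OF meas _ integrable_birkhoff_sum[OF mp int1]])
    then show ?thesis
      using le False by (simp add: ereal_integral_eq_integral pos_le_divide_eq)
  qed
  then show "integrable M (b N)" and "A * real N \<le> integral\<^sup>L M (b N)" by auto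
qed

lemma subadditive_defect_AE_linear_bound:
  fixes b :: "nat \<Rightarrow> 'a \<Rightarrow> real"
  assumes PS: "prob_space M" and erg: "ergodic_map M T"
    and meas: "\<And>n. b n \<in> borel_measurable M"
    and b0: "\<And>x. x \<in> space M \<Longrightarrow> b 0 x = 0"
    and sub: "AE x in M. \<forall>n m. b (n + m) x \<le> b n x + b m ((T ^^ n) x)"
    and int1: "integrable M (b 1)"
    and average: "(INF n\<in>{1..}. ereal_integral M (b n) / ereal (real n)) = ereal A"
  shows "\<exists>t. AE x in M. \<exists>K. \<forall>N. birkhoff_sum T (\<lambda>z. \<bar>b 1 z\<bar>) N x - b N x \<le> t * real N + K"
proof -
  interpret prob_space M by fact
  have mp: "measure_preserving_map M T" using erg by (simp add: ergodic_map_def)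
  have int_abs: "integrable M (\<lambda>z. \<bar>b 1 z\<bar>)" using int1 by simp
  note int_b = integrable_subadditive[OF PS mp meas b0 sub int1 average]
  define y where "y N x = birkhoff_sum T (\<lambda>z. \<bar>b 1 z\<bar>) N x - b N x" for N x
  have int_y: "integrable M (y N)" for N
    unfolding y_def using integrable_birkhoff_sum[OF mp int_abs] int_b(1) by auto
  have "\<exists>t. AE x in M. \<exists>K. \<forall>N. y N x \<le> t * real N + K"
  proof (rule superadditive_AE_linear_bound[OF PS erg borel_measurable_integrable[OF int_y] int_y,
        where C = "integral\<^sup>L M (\<lambda>z. \<bar>b 1 z\<bar>) - A"])
    show "y 0 x = 0" if "x \<in> space M" for x using b0[OF that] by (simp add: y_def birkhoff_sum_def)
    show "AE x in M. \<forall>k l. y k x + y l ((T ^^ k) x) \<le> y (k + l) x"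
      using sub
    proof eventually_elim
      case (elim x)
      show ?case
      proof (intro allI)
        fix k l
        show "y k x + y l ((T ^^ k) x) \<le> y (k + l) x"
          using elim[rule_format, of k l] by (simp add: y_def birkhoff_sum_add)
      qed
    qed
    show "AE x in M. \<forall>n. 0 \<le> y n x"
      using sub AE_space
    proof eventually_elim
      case (elim x)
      have "b n x \<le> birkhoff_sum T (b 1) n x" for n
        using elim(1) b0[OF elim(2)] by (intro subadditive_le_birkhoff_sum) blast+
      also have "birkhoff_sum T (b 1) n x \<le> birkhoff_sum T (\<lambda>z. \<bar>b 1 z\<bar>) n x" for n
        unfolding birkhoff_sum_def by (intro sum_mono) simp
      finally show ?case by (simp add: y_def)
    qed
    show "integral\<^sup>L M (y N) \<le> real N * (integral\<^sup>L M (\<lambda>z. \<bar>b 1 z\<bar>) - A)" for N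
      using int_b(2)[of N] integral_birkhoff_sum[OF mp int_abs, of N]
        integrable_birkhoff_sum[OF mp int_abs, of N] int_b(1)[of N]
      by (simp add: y_def[abs_def] algebra_simps)
  qed
  then show ?thesis by (simp add: y_def)
qed

lemma AE_subadditive_all_indices:
  fixes b :: "nat \<Rightarrow> 'a \<Rightarrow> real"
  assumes T: "T \<in> M \<rightarrow>\<^sub>M M" and b0: "\<And>x. x \<in> space M \<Longrightarrow> b 0 x = 0"
    and sub: "AE x in M. \<forall>n>0. \<forall>m>0. b (n + m) x \<le> b n x + b m ((T ^^ n) x)"
  shows "AE x in M. \<forall>n m. b (n + m) x \<le> b n x + b m ((T ^^ n) x)"
  using sub AE_space
proof eventually_elim
  case (elim x)
  show ?case
  proof (intro allI)
    fix n m
    show "b (n + m) x \<le> b n x + b m ((T ^^ n) x)"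
      using elim(1) b0[OF elim(2)] b0[OF measurable_space[OF funpow_measurable[OF T] elim(2)], of n]
      by (cases "n = 0 \<or> m = 0") auto
  qed
qed

lemma subadditive_descent_density_le:
  fixes b :: "nat \<Rightarrow> 'a \<Rightarrow> real"
  assumes "b 0 x = 0" and sub: "\<And>n m. b (n + m) x \<le> b n x + b m ((T ^^ n) x)"
    and growth: "\<And>N. birkhoff_sum T (\<lambda>z. \<bar>b 1 z\<bar>) N x - b N x \<le> t * real N + K"
    and "a < 0" and "t \<le> \<delta> * - a" and "\<delta> > 0"
  shows "upper_density {n. \<exists>l\<in>{1..n}. b n x - b (n - l) x \<le> a * real l} \<le> ereal \<delta>"
proof (rule upper_density_descent_times_le[OF \<open>b 0 x = 0\<close> _ _ growth[unfolded birkhoff_sum_def]])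
  show "b (Suc k) x \<le> b k x + \<bar>b 1 ((T ^^ k) x)\<bar>" for k
    using sub[of k 1] by simp
qed (use assms in auto)

theorem lemma2p1:
  fixes M :: "'a measure" and \<tau> :: "'a \<Rightarrow> 'a" and b :: "nat \<Rightarrow> 'a \<Rightarrow> real"
    and A \<delta> :: real
  assumes "prob_space M"
    and "ergodic_map M \<tau>"
    and "\<And>n. b n \<in> borel_measurable M"
    and "\<And>\<omega>. \<omega> \<in> space M \<Longrightarrow> b 0 \<omega> = 0"
    and "AE \<omega> in M. \<forall>n>0. \<forall>m>0. b (n + m) \<omega> \<le> b n \<omega> + b m ((\<tau> ^^ n) \<omega>)"
    and "integrable M (b 1)"
    and "(INF n\<in>{1..}. ereal_integral M (b n) / ereal (real n)) = ereal A"
    and "\<delta> > 0"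
  shows "\<exists>c>0. AE \<omega> in M.
           upper_density {n. \<exists>l\<in>{1..n}. b n \<omega> - b (n - l) \<omega> \<le> (A - c) * real l} \<le> ereal \<delta>"
proof -
  have "\<tau> \<in> M \<rightarrow>\<^sub>M M"
    using assms(2) by (simp add: ergodic_map_def measure_preserving_map_measurable)
  from AE_subadditive_all_indices[OF this assms(4,5)]
  have sub: "AE \<omega> in M. \<forall>n m. b (n + m) \<omega> \<le> b n \<omega> + b m ((\<tau> ^^ n) \<omega>)" .
  obtain t where t: "AE \<omega> in M. \<exists>K. \<forall>N. birkhoff_sum \<tau> (\<lambda>z. \<bar>b 1 z\<bar>) N \<omega> - b N \<omega> \<le> t * real N + K"
    using subadditive_defect_AE_linear_bound[OF assms(1-4) sub assms(6,7)] by blast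
  define c where "c = \<bar>A\<bar> + \<bar>t\<bar> / \<delta> + 1"
  have "0 \<le> \<bar>t\<bar> / \<delta>" using \<open>\<delta> > 0\<close> by simp
  then have "0 < c" and "A - c < 0" by (simp_all add: c_def add_nonneg_pos)
  have "t \<le> \<delta> * (\<bar>t\<bar> / \<delta>)" using \<open>\<delta> > 0\<close> by simp
  also have "\<dots> \<le> \<delta> * - (A - c)" using \<open>\<delta> > 0\<close> by (intro mult_left_mono) (auto simp: c_def)
  finally have "t \<le> \<delta> * - (A - c)" .
  have "AE \<omega> in M. upper_density {n. \<exists>l\<in>{1..n}. b n \<omega> - b (n - l) \<omega> \<le> (A - c) * real l} \<le> ereal \<delta>"
    using sub t AE_space
  proof eventually_elim
    case (elim \<omega>)
    then obtain K where "\<And>N. birkhoff_sum \<tau> (\<lambda>z. \<bar>b 1 z\<bar>) N \<omega> - b N \<omega> \<le> t * real N + K" by blast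
    with elim(1) assms(4)[OF elim(3)] show ?case
      using \<open>A - c < 0\<close> \<open>t \<le> \<delta> * - (A - c)\<close> \<open>\<delta> > 0\<close> by (intro subadditive_descent_density_le) auto
  qed
  then show ?thesis using \<open>0 < c\<close> by blast
qed

end
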